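(* Let $\phi$ be a partial listing of $A$, let $\alpha'=\alpha_k\cdots\alpha_{l+1}$ be a prefix with $3\le l+1\le k$, and let $d$ be an integer with $0<d<a_2-1$. If $\alpha'd$ is non-empty, then $\alpha'(d-1)$ is non-empty, and $\alpha'(d+1)$ becomes non-empty after at most one further call to Next$(\varnothing)$.
   Context: Let $k\ge 2$ and let $a_k,\dots,a_2$ be positive integers with $a_2\le a_i$ for all $2<i\le k$. Let $A=[a_k]\times\cdots\times[a_2]$, where $[a]=\{0,\dots,a-1\}$; elements are written $\alpha=\alpha_k\alpha_{k-1}\cdots\alpha_2$. A prefix of $\alpha$ is $\alpha_k\cdots\alpha_{l+1}$ for some $2\le l+1\le k$; $\varnothing$ denotes the empty prefix; for a tuple $\beta=\alpha_k\cdots\alpha_{l+1}$ and $i$, $\beta i$ denotes $\alpha_k\cdots\alpha_{l+1}i$. An array $\phi:A\to\{0,1\}$ is initialized to $0$ everywhere. A tuple $\beta$ (a prefix or an element) is non-empty if some $\alpha\in A$ having $\beta$ as a prefix (or equal to $\beta$) has $\phi(\alpha)=1$, empty otherwise, and full if all such $\alpha$ have $\phi(\alpha)=1$. The procedure Next$(\beta)$, for $\beta=\alpha_k\cdots\alpha_{l+1}$ (with $l=k$ for $\beta=\varnothing$): let $m$ be the least $i$ such that $\beta i$ is empty; if $l=2$, set $\phi(\beta m):=1$ and stop; otherwise, if $m\ge a_2$, replace $m$ by the least $i$ such that $\beta i$ is not full; then call Next$(\beta m)$. A partial listing of $A$ is an array $\phi$ obtained from the all-zero array by finitely many calls of Next$(\varnothing)$.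 *)

theory Defs
  imports Main
begin

text \<open>Tuples \<alpha> = \<alpha>_k \<alpha>_{k-1} ... \<alpha>_2 are represented as lists [\<alpha>_k, ..., \<alpha>_2];
  position j of the list holds coordinate number k - j, ranging over [a (k - j)].
  A prefix \<alpha>_k ... \<alpha>_{l+1} is a list of length k - l.
  The array \<phi> is represented by the set of tuples where \<phi> = 1.\<close>

definition inA :: "(nat \<Rightarrow> nat) \<Rightarrow> nat \<Rightarrow> nat list \<Rightarrow> bool" where
  "inA a k xs \<longleftrightarrow> length xs = k - 1 \<and> (\<forall>j < length xs. xs ! j < a (k - j))"

definition is_prefix_tuple :: "(nat \<Rightarrow> nat) \<Rightarrow> nat \<Rightarrow> nat list \<Rightarrow> bool" where
  "is_prefix_tuple a k xs \<longleftrightarrow> length xs \<le> k - 1 \<and> (\<forall>j < length xs. xs ! j < a (k - j))"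

definition nonempty :: "(nat \<Rightarrow> nat) \<Rightarrow> nat \<Rightarrow> nat list set \<Rightarrow> nat list \<Rightarrow> bool" where
  "nonempty a k \<Phi> \<beta> \<longleftrightarrow> (\<exists>\<alpha>. inA a k \<alpha> \<and> take (length \<beta>) \<alpha> = \<beta> \<and> \<alpha> \<in> \<Phi>)"

definition full :: "(nat \<Rightarrow> nat) \<Rightarrow> nat \<Rightarrow> nat list set \<Rightarrow> nat list \<Rightarrow> bool" where
  "full a k \<Phi> \<beta> \<longleftrightarrow> (\<forall>\<alpha>. inA a k \<alpha> \<and> take (length \<beta>) \<alpha> = \<beta> \<longrightarrow> \<alpha> \<in> \<Phi>)"

text \<open>Next(\<beta>); the first nat argument is a recursion-depth counter (the number of
  coordinates still to be chosen); l = k - length \<beta>.\<close>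
fun nxt :: "(nat \<Rightarrow> nat) \<Rightarrow> nat \<Rightarrow> nat \<Rightarrow> nat list \<Rightarrow> nat list set \<Rightarrow> nat list set" where
  "nxt a k 0 \<beta> \<Phi> = \<Phi>"
| "nxt a k (Suc n) \<beta> \<Phi> =
     (let l = k - length \<beta>;
          m = (LEAST i. \<not> nonempty a k \<Phi> (\<beta> @ [i]))
      in if l = 2 then insert (\<beta> @ [m]) \<Phi>
         else (let m' = (if a 2 \<le> m then (LEAST i. \<not> full a k \<Phi> (\<beta> @ [i])) else m)
               in nxt a k n (\<beta> @ [m']) \<Phi>))"

definition next_empty :: "(nat \<Rightarrow> nat) \<Rightarrow> nat \<Rightarrow> nat list set \<Rightarrow> nat list set" where
  "next_empty a k \<Phi> = nxt a k (k - 1) [] \<Phi>"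

definition partial_listing :: "(nat \<Rightarrow> nat) \<Rightarrow> nat \<Rightarrow> nat list set \<Rightarrow> bool" where
  "partial_listing a k \<Phi> \<longleftrightarrow> (\<exists>n. \<Phi> = (next_empty a k ^^ n) {})"

end

theory Submission
  imports Defs
begin

text \<open>Every call of Next(\<emptyset>) lists exactly one new tuple, obtained by descending through the
  choices Next makes at each prefix. Two invariants of partial listings are preserved by such a
  call: the non-empty children \<beta>i with i < a_2 form an initial segment, and a prefix \<gamma>c below
  which at least two tuples are listed has all children \<gamma>i (i < a_2) non-empty and all \<gamma>i with
  i < c full. The first invariant gives the non-emptiness of \<alpha>'(d-1). For the second claim,
  \<alpha>'0 and \<alpha>'d are non-empty, so at least two tuples are listed below every prefix of \<alpha>'; if \<alpha>'(d+1)
  is still empty, the second invariant forces Next to descend along \<alpha>' (always taking the least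
  non-full child), and at \<alpha>' the least empty child is d+1 < a_2, which Next then takes.
  Both invariants survive a call because Next enters a non-empty child \<gamma>c only through the
  "least non-full" rule, i.e. when all \<gamma>i with i < a_2 are already non-empty and all \<gamma>i with
  i < c are full.\<close>

definition next_choice :: "(nat \<Rightarrow> nat) \<Rightarrow> nat \<Rightarrow> nat list set \<Rightarrow> nat list \<Rightarrow> nat" where
  "next_choice a k \<Phi> \<beta> = (let m = (LEAST i. \<not> nonempty a k \<Phi> (\<beta> @ [i]))
     in if k - length \<beta> = 2 then m
        else if a 2 \<le> m then (LEAST i. \<not> full a k \<Phi> (\<beta> @ [i])) else m)"

definition follows_next :: "(nat \<Rightarrow> nat) \<Rightarrow> nat \<Rightarrow> nat list set \<Rightarrow> nat list \<Rightarrow> bool" where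
  "follows_next a k \<Phi> x \<longleftrightarrow>
     length x = k - 1 \<and> (\<forall>j < k - 1. x ! j = next_choice a k \<Phi> (take j x))"

lemma nxt_inserts_choice_path:
  assumes "length \<beta> + n = k - 1" and "0 < n"
  shows "\<exists>x. nxt a k n \<beta> \<Phi> = insert x \<Phi> \<and> length x = k - 1 \<and> take (length \<beta>) x = \<beta> \<and>
           (\<forall>j. length \<beta> \<le> j \<and> j < k - 1 \<longrightarrow> x ! j = next_choice a k \<Phi> (take j x))"
  using assms
proof (induction n arbitrary: \<beta>)
  case 0
  then show ?case by simp
next
  case (Suc n)
  define c where "c = next_choice a k \<Phi> \<beta>"
  show ?case
  proof (cases "n = 0")
    case True
    then have "k - length \<beta> = 2" using Suc.prems by simp
    then have "nxt a k (Suc n) \<beta> \<Phi> = insert (\<beta> @ [c]) \<Phi>"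
      by (simp add: c_def next_choice_def Let_def)
    moreover have "(\<beta> @ [c]) ! j = next_choice a k \<Phi> (take j (\<beta> @ [c]))"
      if "length \<beta> \<le> j" "j < k - 1" for j
      using that Suc.prems True by (cases "j = length \<beta>") (auto simp: c_def)
    ultimately show ?thesis
      using Suc.prems True by (intro exI[of _ "\<beta> @ [c]"]) auto
  next
    case False
    then have "k - length \<beta> \<noteq> 2" using Suc.prems by simp
    then have "nxt a k (Suc n) \<beta> \<Phi> = nxt a k n (\<beta> @ [c]) \<Phi>"
      by (simp add: c_def next_choice_def Let_def)
    moreover obtain x where x: "nxt a k n (\<beta> @ [c]) \<Phi> = insert x \<Phi>" "length x = k - 1"
      "take (Suc (length \<beta>)) x = \<beta> @ [c]"
      "\<forall>j. Suc (length \<beta>) \<le> j \<and> j < k - 1 \<longrightarrow> x ! j = next_choice a k \<Phi> (take j x)"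
      using Suc.IH[of "\<beta> @ [c]"] Suc.prems False by auto
    moreover have "length \<beta> < length x" using x(2) Suc.prems False by simp
    then have "take (length \<beta>) x = \<beta>" and "x ! length \<beta> = c"
      using x(3) by (simp_all add: take_Suc_conv_app_nth)
    moreover have "x ! j = next_choice a k \<Phi> (take j x)" if "length \<beta> \<le> j" "j < k - 1" for j
      using that x(4) calculation by (cases "j = length \<beta>") (auto simp: c_def)
    ultimately show ?thesis by (intro exI[of _ x]) simp
  qed
qed

lemma next_empty_inserts_path:
  assumes "k \<ge> 2"
  obtains x where "next_empty a k \<Phi> = insert x \<Phi>" and "follows_next a k \<Phi> x"
  using nxt_inserts_choice_path[of "[]" "k - 1" k a \<Phi>] assms
  unfolding next_empty_def follows_next_def by auto

lemma follows_next_take_Suc: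
  assumes "follows_next a k \<Phi> x" and "j < k - 1"
  shows "take (Suc j) x = take j x @ [next_choice a k \<Phi> (take j x)]"
  using assms by (simp add: follows_next_def take_Suc_conv_app_nth)

lemma follows_next_choice:
  assumes x: "follows_next a k \<Phi> x" and t: "take (Suc (length \<beta>)) x = \<beta> @ [c]"
  shows "next_choice a k \<Phi> \<beta> = c"
proof -
  have "length (take (Suc (length \<beta>)) x) = Suc (length \<beta>)" using t by simp
  then have "length \<beta> < length x" by simp
  then have "take (length \<beta>) x = \<beta>" and "x ! length \<beta> = c"
    using t by (simp_all add: take_Suc_conv_app_nth)
  moreover have "length \<beta> < k - 1" using \<open>length \<beta> < length x\<close> x by (simp add: follows_next_def)
  ultimately show ?thesis using x unfolding follows_next_def by metis
qed

lemma is_prefix_tuple_take: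
  assumes "inA a k \<alpha>" and "take (length \<beta>) \<alpha> = \<beta>"
  shows "is_prefix_tuple a k \<beta>"
proof -
  have "length \<beta> \<le> length \<alpha>" using assms(2) by (metis length_take min.cobounded1)
  moreover have "\<beta> ! j = \<alpha> ! j" if "j < length \<beta>" for j
    using that assms(2) by (metis nth_take)
  ultimately show ?thesis using assms(1) by (auto simp: is_prefix_tuple_def inA_def)
qed

lemma nonempty_imp_prefix_tuple: "nonempty a k \<Phi> \<beta> \<Longrightarrow> is_prefix_tuple a k \<beta>"
  unfolding nonempty_def using is_prefix_tuple_take by blast

lemma not_full_imp_prefix_tuple: "\<not> full a k \<Phi> \<beta> \<Longrightarrow> is_prefix_tuple a k \<beta>"
  unfolding full_def using is_prefix_tuple_take by blast

lemma is_prefix_tuple_snoc: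
  assumes "is_prefix_tuple a k \<beta>" and "length \<beta> < k - 1" and "i < a (k - length \<beta>)"
  shows "is_prefix_tuple a k (\<beta> @ [i])"
  using assms unfolding is_prefix_tuple_def by (auto simp: nth_append less_Suc_eq)

lemma is_prefix_tuple_snoc_le:
  "is_prefix_tuple a k (\<beta> @ [c]) \<Longrightarrow> i \<le> c \<Longrightarrow> is_prefix_tuple a k (\<beta> @ [i])"
  unfolding is_prefix_tuple_def by (auto simp: nth_append split: if_splits)

lemma prefix_tuple_extends_to_inA:
  assumes pos: "\<forall>i. 2 \<le> i \<and> i \<le> k \<longrightarrow> 0 < a i" and "is_prefix_tuple a k \<beta>"
  obtains \<alpha> where "inA a k \<alpha>" and "take (length \<beta>) \<alpha> = \<beta>"
proof
  let ?\<alpha> = "\<beta> @ replicate (k - 1 - length \<beta>) 0"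
  have "?\<alpha> ! j < a (k - j)" if "j < k - 1" for j
    using that assms pos by (cases "j < length \<beta>") (auto simp: is_prefix_tuple_def nth_append)
  then show "inA a k ?\<alpha>"
    using assms(2) by (auto simp: is_prefix_tuple_def inA_def)
  show "take (length \<beta>) ?\<alpha> = \<beta>" by simp
qed

lemma full_imp_nonempty:
  assumes "\<forall>i. 2 \<le> i \<and> i \<le> k \<longrightarrow> 0 < a i" and "is_prefix_tuple a k \<beta>"
    and "full a k \<Phi> \<beta>"
  shows "nonempty a k \<Phi> \<beta>"
  using prefix_tuple_extends_to_inA[OF assms(1,2)] assms(3)
  unfolding full_def nonempty_def by metis

lemma not_full_take:
  assumes "\<not> full a k \<Phi> \<delta>" and "j \<le> length \<delta>"
  shows "\<not> full a k \<Phi> (take j \<delta>)"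
  using assms unfolding full_def by (metis length_take min.absorb2 take_take)

lemma nonempty_insert: "nonempty a k \<Phi> \<beta> \<Longrightarrow> nonempty a k (insert x \<Phi>) \<beta>"
  unfolding nonempty_def by blast

lemma full_insert: "full a k \<Phi> \<beta> \<Longrightarrow> full a k (insert x \<Phi>) \<beta>"
  unfolding full_def by blast

lemma ex_empty_child: "\<exists>i. \<not> nonempty a k \<Phi> (\<beta> @ [i])"
proof
  show "\<not> nonempty a k \<Phi> (\<beta> @ [a (k - length \<beta>)])"
  proof
    assume "nonempty a k \<Phi> (\<beta> @ [a (k - length \<beta>)])"
    then have "is_prefix_tuple a k (\<beta> @ [a (k - length \<beta>)])" by (rule nonempty_imp_prefix_tuple)
    then show False unfolding is_prefix_tuple_def
      by (metis length_append_singleton lessI less_irrefl nth_append_length)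
  qed
qed

lemma least_empty_child:
  "\<not> nonempty a k \<Phi> (\<beta> @ [LEAST i. \<not> nonempty a k \<Phi> (\<beta> @ [i])])"
  using ex_empty_child by (rule LeastI_ex)

lemma next_choice_least_empty:
  assumes "(LEAST i. \<not> nonempty a k \<Phi> (\<beta> @ [i])) < a 2"
  shows "next_choice a k \<Phi> \<beta> = (LEAST i. \<not> nonempty a k \<Phi> (\<beta> @ [i]))"
  using assms by (simp add: next_choice_def Let_def)

lemma nonempty_below_choice:
  assumes pos: "\<forall>i. 2 \<le> i \<and> i \<le> k \<longrightarrow> 0 < a i"
    and c: "next_choice a k \<Phi> \<beta> = c" and r: "is_prefix_tuple a k (\<beta> @ [c])"
    and "i < c"
  shows "nonempty a k \<Phi> (\<beta> @ [i])"
proof (cases "c = (LEAST i. \<not> nonempty a k \<Phi> (\<beta> @ [i]))")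
  case True
  then show ?thesis using \<open>i < c\<close> not_less_Least by blast
next
  case False
  then have "c = (LEAST i. \<not> full a k \<Phi> (\<beta> @ [i]))"
    using c unfolding next_choice_def Let_def by (auto split: if_splits)
  then have "full a k \<Phi> (\<beta> @ [i])" using \<open>i < c\<close> not_less_Least by blast
  with full_imp_nonempty[OF pos] is_prefix_tuple_snoc_le[OF r] \<open>i < c\<close> show ?thesis by simp
qed

lemma nonempty_choice_children:
  assumes "next_choice a k \<Phi> \<beta> = c" and "nonempty a k \<Phi> (\<beta> @ [c])"
  shows "\<forall>i < a 2. nonempty a k \<Phi> (\<beta> @ [i])" and "\<forall>i < c. full a k \<Phi> (\<beta> @ [i])"
proof -
  define m where "m = (LEAST i. \<not> nonempty a k \<Phi> (\<beta> @ [i]))"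
  have "c \<noteq> m" using assms(2) least_empty_child unfolding m_def by metis
  then have m: "a 2 \<le> m" and c: "c = (LEAST i. \<not> full a k \<Phi> (\<beta> @ [i]))"
    using assms(1) unfolding next_choice_def m_def[symmetric] Let_def by (auto split: if_splits)
  show "\<forall>i < a 2. nonempty a k \<Phi> (\<beta> @ [i])"
    using m not_less_Least[of _ "\<lambda>i. \<not> nonempty a k \<Phi> (\<beta> @ [i])"]
    unfolding m_def by (meson order.strict_trans2)
  show "\<forall>i < c. full a k \<Phi> (\<beta> @ [i])"
    using c not_less_Least by blast
qed

definition lower_children_nonempty :: "(nat \<Rightarrow> nat) \<Rightarrow> nat \<Rightarrow> nat list set \<Rightarrow> bool" where
  "lower_children_nonempty a k \<Phi> \<longleftrightarrow>
     (\<forall>\<beta> i j. i < j \<and> j < a 2 \<and> nonempty a k \<Phi> (\<beta> @ [j]) \<longrightarrow> nonempty a k \<Phi> (\<beta> @ [i]))"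

definition crowded :: "(nat \<Rightarrow> nat) \<Rightarrow> nat \<Rightarrow> nat list set \<Rightarrow> nat list \<Rightarrow> bool" where
  "crowded a k \<Phi> \<delta> \<longleftrightarrow> (\<exists>\<alpha>1 \<alpha>2. \<alpha>1 \<noteq> \<alpha>2 \<and> \<alpha>1 \<in> \<Phi> \<and> \<alpha>2 \<in> \<Phi> \<and> inA a k \<alpha>1 \<and> inA a k \<alpha>2 \<and>
      take (length \<delta>) \<alpha>1 = \<delta> \<and> take (length \<delta>) \<alpha>2 = \<delta>)"

definition crowded_saturated :: "(nat \<Rightarrow> nat) \<Rightarrow> nat \<Rightarrow> nat list set \<Rightarrow> bool" where
  "crowded_saturated a k \<Phi> \<longleftrightarrow> (\<forall>\<gamma> c. crowded a k \<Phi> (\<gamma> @ [c]) \<longrightarrow>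
      (\<forall>i < a 2. nonempty a k \<Phi> (\<gamma> @ [i])) \<and> (\<forall>i < c. full a k \<Phi> (\<gamma> @ [i])))"

lemma crowded_of_two_children:
  assumes "nonempty a k \<Phi> (\<beta> @ [i])" and "nonempty a k \<Phi> (\<beta> @ [j])" and "i \<noteq> j"
  shows "crowded a k \<Phi> \<beta>"
  using assms unfolding nonempty_def crowded_def
  by (metis append_eq_conv_conj length_append_singleton take_take le_add1
      Suc_eq_plus1 min.absorb1 nth_append_length)

lemma crowded_take:
  assumes "crowded a k \<Phi> \<delta>" and "j \<le> length \<delta>"
  shows "crowded a k \<Phi> (take j \<delta>)"
  using assms unfolding crowded_def by (metis length_take min.absorb2 take_take)

lemma crowded_length:
  assumes "crowded a k \<Phi> \<delta>"
  shows "length \<delta> < k - 1"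
proof (rule ccontr)
  assume "\<not> length \<delta> < k - 1"
  with assms show False
    unfolding crowded_def inA_def by (metis not_less take_all)
qed

lemma insert_path_preserves_invariants:
  assumes pos: "\<forall>i. 2 \<le> i \<and> i \<le> k \<longrightarrow> 0 < a i" and x: "follows_next a k \<Phi> x"
    and I: "lower_children_nonempty a k \<Phi>" and L: "crowded_saturated a k \<Phi>"
  shows "lower_children_nonempty a k (insert x \<Phi>)" and "crowded_saturated a k (insert x \<Phi>)"
proof -
  show "lower_children_nonempty a k (insert x \<Phi>)"
    unfolding lower_children_nonempty_def
  proof (intro allI impI)
    fix \<beta> i j assume h: "i < j \<and> j < a 2 \<and> nonempty a k (insert x \<Phi>) (\<beta> @ [j])"
    show "nonempty a k (insert x \<Phi>) (\<beta> @ [i])"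
    proof (cases "nonempty a k \<Phi> (\<beta> @ [j])")
      case True
      then show ?thesis using I h unfolding lower_children_nonempty_def by (blast intro: nonempty_insert)
    next
      case False
      then have xa: "inA a k x" "take (Suc (length \<beta>)) x = \<beta> @ [j]"
        using h unfolding nonempty_def by auto
      with follows_next_choice[OF x] is_prefix_tuple_take[of a k x "\<beta> @ [j]"]
      have "nonempty a k \<Phi> (\<beta> @ [i])"
        using nonempty_below_choice[OF pos] h by simp
      then show ?thesis by (rule nonempty_insert)
    qed
  qed
  show "crowded_saturated a k (insert x \<Phi>)"
    unfolding crowded_saturated_def
  proof (intro allI impI)
    fix \<gamma> c assume h: "crowded a k (insert x \<Phi>) (\<gamma> @ [c])"
    show "(\<forall>i < a 2. nonempty a k (insert x \<Phi>) (\<gamma> @ [i])) \<and>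
          (\<forall>i < c. full a k (insert x \<Phi>) (\<gamma> @ [i]))"
    proof (cases "crowded a k \<Phi> (\<gamma> @ [c])")
      case True
      then show ?thesis using L unfolding crowded_saturated_def
        by (blast intro: nonempty_insert full_insert)
    next
      case False
      then have "nonempty a k \<Phi> (\<gamma> @ [c]) \<and> take (Suc (length \<gamma>)) x = \<gamma> @ [c]"
        using h unfolding crowded_def nonempty_def by (auto 0 4)
      then have "nonempty a k \<Phi> (\<gamma> @ [c])" "next_choice a k \<Phi> \<gamma> = c"
        using follows_next_choice[OF x] by auto
      then show ?thesis
        using nonempty_choice_children by (blast intro: nonempty_insert full_insert)
    qed
  qed
qed

lemma partial_listing_invariants:
  assumes "k \<ge> 2" and pos: "\<forall>i. 2 \<le> i \<and> i \<le> k \<longrightarrow> 0 < a i"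
    and "partial_listing a k \<Phi>"
  shows "lower_children_nonempty a k \<Phi> \<and> crowded_saturated a k \<Phi>"
proof -
  obtain n where "\<Phi> = (next_empty a k ^^ n) {}"
    using assms(3) by (auto simp: partial_listing_def)
  moreover have "lower_children_nonempty a k ((next_empty a k ^^ n) {}) \<and>
                 crowded_saturated a k ((next_empty a k ^^ n) {})"
  proof (induction n)
    case 0
    then show ?case
      by (simp add: lower_children_nonempty_def crowded_saturated_def nonempty_def crowded_def)
  next
    case (Suc n)
    obtain x where "next_empty a k ((next_empty a k ^^ n) {}) = insert x ((next_empty a k ^^ n) {})"
      "follows_next a k ((next_empty a k ^^ n) {}) x"
      using next_empty_inserts_path[OF assms(1)] by blast
    then show ?case using insert_path_preserves_invariants[OF pos] Suc.IH by simp
  qed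
  ultimately show ?thesis by simp
qed

text \<open>Next never enters a full prefix: at the last level the least empty child is itself empty
  and in range, otherwise it is either in range (by \<open>a 2 \<le> a i\<close>) or replaced by the least
  non-full child.\<close>

lemma next_choice_not_full:
  assumes pos: "\<forall>i. 2 \<le> i \<and> i \<le> k \<longrightarrow> 0 < a i"
    and mono: "\<forall>i. 2 < i \<and> i \<le> k \<longrightarrow> a 2 \<le> a i"
    and nf: "\<not> full a k \<Phi> \<beta>" and len: "length \<beta> < k - 1"
  shows "\<not> full a k \<Phi> (\<beta> @ [next_choice a k \<Phi> \<beta>])"
proof -
  define m where "m = (LEAST i. \<not> nonempty a k \<Phi> (\<beta> @ [i]))"
  have me: "\<not> nonempty a k \<Phi> (\<beta> @ [m])" unfolding m_def by (rule least_empty_child)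
  obtain \<alpha> where \<alpha>: "inA a k \<alpha>" "take (length \<beta>) \<alpha> = \<beta>" "\<alpha> \<notin> \<Phi>"
    using nf unfolding full_def by blast
  have "length \<beta> < length \<alpha>" using \<alpha>(1) len by (simp add: inA_def)
  then have t: "take (Suc (length \<beta>)) \<alpha> = \<beta> @ [\<alpha> ! length \<beta>]"
    using \<alpha>(2) by (simp add: take_Suc_conv_app_nth)
  then have nfc: "\<not> full a k \<Phi> (\<beta> @ [\<alpha> ! length \<beta>])"
    using \<alpha> unfolding full_def by (metis length_append_singleton)
  have m_not_full: "\<not> full a k \<Phi> (\<beta> @ [m])" if "is_prefix_tuple a k (\<beta> @ [m])"
    using me full_imp_nonempty[OF pos that] by blast
  consider "k - length \<beta> = 2" | "k - length \<beta> \<noteq> 2" "a 2 \<le> m"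
    | "k - length \<beta> \<noteq> 2" "m < a 2" by linarith
  then show ?thesis
  proof cases
    case 1
    have "\<not> nonempty a k \<Phi> (\<beta> @ [\<alpha> ! length \<beta>])"
    proof
      assume "nonempty a k \<Phi> (\<beta> @ [\<alpha> ! length \<beta>])"
      then obtain \<alpha>' where "inA a k \<alpha>'" "take (Suc (length \<beta>)) \<alpha>' = \<beta> @ [\<alpha> ! length \<beta>]" "\<alpha>' \<in> \<Phi>"
        unfolding nonempty_def by auto
      moreover have "length \<alpha> = Suc (length \<beta>)" "length \<alpha>' = Suc (length \<beta>)"
        using \<alpha>(1) \<open>inA a k \<alpha>'\<close> 1 by (auto simp: inA_def)
      ultimately show False using t \<alpha>(3) by simp
    qed
    then have "m \<le> \<alpha> ! length \<beta>" unfolding m_def by (rule Least_le)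
    with is_prefix_tuple_snoc_le not_full_imp_prefix_tuple[OF nfc]
    have "is_prefix_tuple a k (\<beta> @ [m])" by blast
    with m_not_full show ?thesis using 1 by (simp add: next_choice_def m_def[symmetric])
  next
    case 2
    then have "next_choice a k \<Phi> \<beta> = (LEAST i. \<not> full a k \<Phi> (\<beta> @ [i]))"
      by (simp add: next_choice_def m_def[symmetric] Let_def)
    then show ?thesis using nfc by (metis LeastI)
  next
    case 3
    then have "a 2 \<le> a (k - length \<beta>)" using mono len by simp
    with 3 have "is_prefix_tuple a k (\<beta> @ [m])"
      using is_prefix_tuple_snoc[OF not_full_imp_prefix_tuple[OF nf] len] by simp
    with m_not_full show ?thesis using 3 by (simp add: next_choice_def m_def[symmetric])
  qed
qed

lemma follows_next_inA:
  assumes pos: "\<forall>i. 2 \<le> i \<and> i \<le> k \<longrightarrow> 0 < a i"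
    and mono: "\<forall>i. 2 < i \<and> i \<le> k \<longrightarrow> a 2 \<le> a i"
    and x: "follows_next a k \<Phi> x" and nf: "\<not> full a k \<Phi> []"
  shows "inA a k x"
proof -
  have "\<not> full a k \<Phi> (take j x)" if "j \<le> k - 1" for j
    using that
  proof (induction j)
    case 0
    then show ?case using nf by simp
  next
    case (Suc j)
    then show ?case
      using follows_next_take_Suc[OF x] next_choice_not_full[OF pos mono] x
      by (simp add: follows_next_def)
  qed
  from this[of "k - 1"] have "is_prefix_tuple a k x"
    using x not_full_imp_prefix_tuple by (simp add: follows_next_def)
  then show ?thesis using x by (simp add: is_prefix_tuple_def inA_def follows_next_def)
qed

lemma next_choice_crowded:
  assumes L: "crowded_saturated a k \<Phi>"
    and cr: "crowded a k \<Phi> (\<gamma> @ [c])" and nf: "\<not> full a k \<Phi> (\<gamma> @ [c])"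
  shows "next_choice a k \<Phi> \<gamma> = c"
proof -
  have ne: "\<forall>i < a 2. nonempty a k \<Phi> (\<gamma> @ [i])" and f: "\<forall>i < c. full a k \<Phi> (\<gamma> @ [i])"
    using L cr unfolding crowded_saturated_def by auto
  have "a 2 \<le> (LEAST i. \<not> nonempty a k \<Phi> (\<gamma> @ [i]))"
    using ne least_empty_child not_le by metis
  moreover have "k - length \<gamma> \<noteq> 2" using crowded_length[OF cr] by simp
  moreover have "(LEAST i. \<not> full a k \<Phi> (\<gamma> @ [i])) = c"
    using nf f by (metis Least_equality not_le)
  ultimately show ?thesis by (simp add: next_choice_def Let_def)
qed

lemma follows_next_crowded_prefix:
  assumes L: "crowded_saturated a k \<Phi>" and x: "follows_next a k \<Phi> x"
    and cr: "crowded a k \<Phi> \<delta>" and nf: "\<not> full a k \<Phi> \<delta>"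
  shows "take (length \<delta>) x = \<delta>"
proof -
  have "take j x = take j \<delta>" if "j \<le> length \<delta>" for j
    using that
  proof (induction j)
    case 0
    then show ?case by simp
  next
    case (Suc j)
    then have j: "j < length \<delta>" by simp
    then have \<delta>j: "take (Suc j) \<delta> = take j \<delta> @ [\<delta> ! j]" by (simp add: take_Suc_conv_app_nth)
    have "next_choice a k \<Phi> (take j \<delta>) = \<delta> ! j"
      using next_choice_crowded[OF L] crowded_take[OF cr] not_full_take[OF nf] Suc.prems
      by (metis \<delta>j)
    moreover have "j < k - 1" using j crowded_length[OF cr] by simp
    ultimately show ?case
      using follows_next_take_Suc[OF x] Suc.IH j \<delta>j by simp
  qed
  then show ?thesis by simp
qed

lemma next_empty_fills_next_child:
  assumes "k \<ge> 2" and pos: "\<forall>i. 2 \<le> i \<and> i \<le> k \<longrightarrow> 0 < a i"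
    and mono: "\<forall>i. 2 < i \<and> i \<le> k \<longrightarrow> a 2 \<le> a i"
    and I: "lower_children_nonempty a k \<Phi>" and L: "crowded_saturated a k \<Phi>"
    and "0 < d" and "d + 1 < a 2" and r: "is_prefix_tuple a k (\<beta> @ [d + 1])"
    and ne: "nonempty a k \<Phi> (\<beta> @ [d])" and emp: "\<not> nonempty a k \<Phi> (\<beta> @ [d + 1])"
  shows "nonempty a k (next_empty a k \<Phi>) (\<beta> @ [d + 1])"
proof -
  obtain x where nx: "next_empty a k \<Phi> = insert x \<Phi>" and x: "follows_next a k \<Phi> x"
    using next_empty_inserts_path[OF assms(1)] by blast
  have "d < a 2" using \<open>d + 1 < a 2\<close> by simp
  then have below: "\<forall>i < d. nonempty a k \<Phi> (\<beta> @ [i])"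
    using I ne unfolding lower_children_nonempty_def by blast
  have least: "(LEAST i. \<not> nonempty a k \<Phi> (\<beta> @ [i])) = d + 1"
  proof (rule Least_equality)
    show "\<not> nonempty a k \<Phi> (\<beta> @ [d + 1])" by (rule emp)
    show "d + 1 \<le> y" if "\<not> nonempty a k \<Phi> (\<beta> @ [y])" for y
      using that below ne by (cases "y < d"; cases "y = d") auto
  qed
  have cr: "crowded a k \<Phi> \<beta>"
    using crowded_of_two_children[OF _ ne, of 0] below \<open>0 < d\<close> by simp
  have nf: "\<not> full a k \<Phi> (\<beta> @ [d + 1])"
    using emp full_imp_nonempty[OF pos r] by blast
  then have "\<not> full a k \<Phi> \<beta>" using not_full_take[of a k \<Phi> "\<beta> @ [d + 1]" "length \<beta>"] by simp
  then have "take (length \<beta>) x = \<beta>" using follows_next_crowded_prefix[OF L x cr] by simp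
  moreover have "next_choice a k \<Phi> \<beta> = d + 1"
    using next_choice_least_empty least \<open>d + 1 < a 2\<close> by simp
  ultimately have "take (Suc (length \<beta>)) x = \<beta> @ [d + 1]"
    using follows_next_take_Suc[OF x crowded_length[OF cr]] by simp
  moreover have "inA a k x"
    using follows_next_inA[OF pos mono x] not_full_take[OF nf, of 0] by simp
  ultimately show ?thesis using nx unfolding nonempty_def by (intro exI[of _ x]) simp
qed

theorem lemma7:
  fixes a :: "nat \<Rightarrow> nat" and k l d :: nat and \<alpha>' :: "nat list" and \<Phi> :: "nat list set"
  assumes "k \<ge> 2"
    and "\<forall>i. 2 \<le> i \<and> i \<le> k \<longrightarrow> 0 < a i"
    and "\<forall>i. 2 < i \<and> i \<le> k \<longrightarrow> a 2 \<le> a i"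
    and "partial_listing a k \<Phi>"
    and "3 \<le> l + 1" and "l + 1 \<le> k"
    and "length \<alpha>' = k - l" and "is_prefix_tuple a k \<alpha>'"
    and "0 < d" and "d < a 2 - 1"
    and "nonempty a k \<Phi> (\<alpha>' @ [d])"
  shows "nonempty a k \<Phi> (\<alpha>' @ [d - 1]) \<and>
         (nonempty a k \<Phi> (\<alpha>' @ [d + 1]) \<or> nonempty a k (next_empty a k \<Phi>) (\<alpha>' @ [d + 1]))"
proof -
  have I: "lower_children_nonempty a k \<Phi>" and L: "crowded_saturated a k \<Phi>"
    using partial_listing_invariants[OF assms(1,2,4)] by auto
  have "nonempty a k \<Phi> (\<alpha>' @ [d - 1])"
  proof -
    have "d - 1 < d" and "d < a 2" using assms(9,10) by simp_all
    then show ?thesis using I assms(11) unfolding lower_children_nonempty_def by blast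
  qed
  moreover have "a 2 \<le> a (k - length \<alpha>')"
    using assms(3,5-7) by (cases "l = 2") auto
  then have "is_prefix_tuple a k (\<alpha>' @ [d + 1])"
    using is_prefix_tuple_snoc[OF assms(8)] assms(5-7,10) by simp
  then have "nonempty a k \<Phi> (\<alpha>' @ [d + 1]) \<or> nonempty a k (next_empty a k \<Phi>) (\<alpha>' @ [d + 1])"
    using next_empty_fills_next_child[OF assms(1-3) I L assms(9)] assms(10,11) by fastforce
  ultimately show ?thesis by blast
qed

end
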